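(* Let $\Gamma$ be a splice diagram satisfying the edge determinant condition, and let $v$ be a node of $\Gamma$ with adjacent vertices $u_1,\dots,u_{\delta_v}$. Then (1) the vectors $\rho(u_1),\dots,\rho(u_{\delta_v})$ are linearly independent in $\mathbb{R}^n$; (2) $\rho(v)$ lies in the relative interior of the convex hull of $\{\rho(u_1),\dots,\rho(u_{\delta_v})\}$.
   Context: A splice diagram is a finite tree $\Gamma$ with at least one vertex of valency $\geq3$ and no vertex of valency $2$; vertices of valency $1$ are leaves, others nodes; $\delta_v$ is the valency of $v$. For each node $v$ and edge $e$ at $v$ a positive integer weight $d_{v,e}$ is given; $d_v=\prod_{e\ni v}d_{v,e}$; $d_{v,u}$ is the weight at $v$ of the edge toward $u$. For distinct vertices $u,v$, $\ell_{u,v}$ is the product of all $d_{w,e}$ with $w$ a node on the geodesic $[u,v]$ and $e$ an edge at $w$ not in $[u,v]$. Edge determinant condition: $d_{u,v}d_{v,u}>\ell_{u,v}$ for every edge $[u,v]$ between nodes. With $n$ leaves, $w_\lambda$ is the standard basis vector of $\mathbb{R}^n$ of leaf $\lambda$, $w_u=\sum_\lambda\ell_{u,\lambda}w_\lambda$ for a node $u$, and $\rho(u)=w_u/|w_u|$ ($1$-norm) for every vertex $u$. *)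

theory Defs
  imports "HOL-Analysis.Analysis"
begin

definition nbrs :: "('a \<Rightarrow> 'a \<Rightarrow> bool) \<Rightarrow> 'a \<Rightarrow> 'a set" where
  "nbrs adj v = {u. adj v u}"

definition valency :: "('a \<Rightarrow> 'a \<Rightarrow> bool) \<Rightarrow> 'a \<Rightarrow> nat" where
  "valency adj v = card (nbrs adj v)"

definition is_leaf :: "'a set \<Rightarrow> ('a \<Rightarrow> 'a \<Rightarrow> bool) \<Rightarrow> 'a \<Rightarrow> bool" where
  "is_leaf V adj v \<longleftrightarrow> v \<in> V \<and> valency adj v = 1"

definition is_node :: "'a set \<Rightarrow> ('a \<Rightarrow> 'a \<Rightarrow> bool) \<Rightarrow> 'a \<Rightarrow> bool" where
  "is_node V adj v \<longleftrightarrow> v \<in> V \<and> valency adj v \<noteq> 1"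

definition is_path :: "('a \<Rightarrow> 'a \<Rightarrow> bool) \<Rightarrow> 'a list \<Rightarrow> 'a \<Rightarrow> 'a \<Rightarrow> bool" where
  "is_path adj p u v \<longleftrightarrow> p \<noteq> [] \<and> hd p = u \<and> last p = v \<and> distinct p \<and> successively adj p"

definition is_tree :: "'a set \<Rightarrow> ('a \<Rightarrow> 'a \<Rightarrow> bool) \<Rightarrow> bool" where
  "is_tree V adj \<longleftrightarrow> finite V \<and> V \<noteq> {} \<and>
     (\<forall>u v. adj u v \<longrightarrow> u \<in> V \<and> v \<in> V) \<and>
     (\<forall>u v. adj u v \<longrightarrow> adj v u) \<and> (\<forall>u. \<not> adj u u) \<and>
     (\<forall>u\<in>V. \<forall>v\<in>V. \<exists>!p. is_path adj p u v)"

definition geod :: "('a \<Rightarrow> 'a \<Rightarrow> bool) \<Rightarrow> 'a \<Rightarrow> 'a \<Rightarrow> 'a list" where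
  "geod adj u v = (THE p. is_path adj p u v)"

text \<open>d w x: the weight at the node w of the edge {w,x}.\<close>
definition splice_diagram :: "'a set \<Rightarrow> ('a \<Rightarrow> 'a \<Rightarrow> bool) \<Rightarrow> ('a \<Rightarrow> 'a \<Rightarrow> nat) \<Rightarrow> bool" where
  "splice_diagram V adj d \<longleftrightarrow> is_tree V adj \<and>
     (\<exists>v\<in>V. valency adj v \<ge> 3) \<and> (\<forall>v\<in>V. valency adj v \<noteq> 2) \<and>
     (\<forall>w x. is_node V adj w \<and> adj w x \<longrightarrow> d w x > 0)"

definition ell :: "'a set \<Rightarrow> ('a \<Rightarrow> 'a \<Rightarrow> bool) \<Rightarrow> ('a \<Rightarrow> 'a \<Rightarrow> nat) \<Rightarrow> 'a \<Rightarrow> 'a \<Rightarrow> nat" where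
  "ell V adj d u v =
     (\<Prod>w\<in>{w \<in> set (geod adj u v). is_node V adj w}.
        \<Prod>x\<in>{x. adj w x \<and> x \<notin> set (geod adj u v)}. d w x)"

definition edge_determinant_condition ::
  "'a set \<Rightarrow> ('a \<Rightarrow> 'a \<Rightarrow> bool) \<Rightarrow> ('a \<Rightarrow> 'a \<Rightarrow> nat) \<Rightarrow> bool" where
  "edge_determinant_condition V adj d \<longleftrightarrow>
     (\<forall>u v. adj u v \<and> is_node V adj u \<and> is_node V adj v \<longrightarrow>
        d u v * d v u > ell V adj d u v)"

text \<open>Vectors live in real^'a; only leaf coordinates are used (the standard basis
  vectors of the leaves span a copy of R^n).\<close>
definition wvec :: "'a set \<Rightarrow> ('a \<Rightarrow> 'a \<Rightarrow> bool) \<Rightarrow> ('a \<Rightarrow> 'a \<Rightarrow> nat) \<Rightarrow> 'a \<Rightarrow> real ^ ('a::finite)" where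
  "wvec V adj d u = (\<chi> l. if is_leaf V adj l then
       (if is_leaf V adj u then (if l = u then 1 else 0) else real (ell V adj d u l))
     else 0)"

definition norm1 :: "real ^ ('a::finite) \<Rightarrow> real" where
  "norm1 x = (\<Sum>i\<in>UNIV. \<bar>x $ i\<bar>)"

definition rho :: "'a set \<Rightarrow> ('a \<Rightarrow> 'a \<Rightarrow> bool) \<Rightarrow> ('a \<Rightarrow> 'a \<Rightarrow> nat) \<Rightarrow> 'a \<Rightarrow> real ^ ('a::finite)" where
  "rho V adj d u = inverse (norm1 (wvec V adj d u)) *\<^sub>R wvec V adj d u"

end

(*
  Fix the node v and let c(l) be the neighbour of v on the geodesic from v to a leaf l.
  Moving the first endpoint of ell(-, l) across an edge multiplies it by a ratio of weights,
  so for a neighbour u of v the leaf coordinates of w_u are alpha_u ell(v, l) if c(l) = u and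
  beta_u ell(v, l) otherwise, while those of w_v are ell(v, l).  The edge determinant
  condition at the edge [v, u] says exactly beta_u < alpha_u.

  For vectors of this block shape, a vanishing combination sum x_u w_u forces
  x_u (alpha_u - beta_u) = - sum_w x_w beta_w for every u, hence all x_u = 0; and
  w_v = sum y_u w_u with y_u = 1 / ((1 + S) (alpha_u - beta_u)) > 0, where
  S = sum_u beta_u / (alpha_u - beta_u).  All these vectors are nonnegative, so the 1-norm is
  additive on them, and normalising turns this positive combination into a convex
  combination of the rho(u) with positive coefficients: a point of the relative interior of
  the simplex they span.
*)
theory Submission
  imports Defs
begin

section \<open>Positive combinations of nonnegative vectors\<close>

definition l1_normalize :: "real ^ 'n::finite \<Rightarrow> real ^ 'n" where
  "l1_normalize x = inverse (norm1 x) *\<^sub>R x"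

lemma norm1_scaleR: "norm1 (c *\<^sub>R x) = \<bar>c\<bar> * norm1 x"
  by (simp add: norm1_def abs_mult sum_distrib_left)

lemma norm1_pos_iff: "0 < norm1 x \<longleftrightarrow> x \<noteq> 0"
proof -
  have "norm1 x = 0 \<longleftrightarrow> x = 0"
    by (simp add: norm1_def sum_nonneg_eq_0_iff vec_eq_iff)
  moreover have "0 \<le> norm1 x"
    by (simp add: norm1_def sum_nonneg)
  ultimately show ?thesis
    by linarith
qed

lemma norm1_sum_nonneg:
  fixes g :: "'b \<Rightarrow> real ^ 'n::finite"
  assumes "\<And>u. u \<in> N \<Longrightarrow> 0 \<le> g u"
  shows "norm1 (sum g N) = (\<Sum>u\<in>N. norm1 (g u))"
proof -
  have "norm1 (sum g N) = (\<Sum>i\<in>UNIV. \<Sum>u\<in>N. g u $ i)"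
    unfolding norm1_def sum_component
    using assms by (intro sum.cong refl abs_of_nonneg sum_nonneg) (auto simp: less_eq_vec_def)
  also have "\<dots> = (\<Sum>u\<in>N. norm1 (g u))"
    unfolding norm1_def using assms
    by (subst sum.swap) (intro sum.cong refl; auto simp: less_eq_vec_def)
  finally show ?thesis .
qed

lemma family_independent_imp_inj_on_independent:
  fixes g :: "'b \<Rightarrow> 'v::real_vector"
  assumes "finite N"
    and indep: "\<And>x. (\<Sum>u\<in>N. x u *\<^sub>R g u) = 0 \<Longrightarrow> \<forall>u\<in>N. x u = 0"
  shows "inj_on g N \<and> independent (g ` N)"
proof
  show inj: "inj_on g N"
  proof (rule inj_onI, rule ccontr)
    fix u u' assume "u \<in> N" "u' \<in> N" "g u = g u'" "u \<noteq> u'"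
    then have "(\<Sum>w\<in>N. (if w = u then 1 else if w = u' then -1 else 0) *\<^sub>R g w)
        = (\<Sum>w\<in>N. (if w = u then g u else 0) - (if w = u' then g u' else 0))"
      by (intro sum.cong) auto
    also have "\<dots> = 0"
      using \<open>finite N\<close> \<open>u \<in> N\<close> \<open>u' \<in> N\<close> \<open>g u = g u'\<close> by (simp add: sum_subtractf)
    finally show False
      using indep \<open>u \<in> N\<close> by fastforce
  qed
  show "independent (g ` N)"
  proof
    assume "dependent (g ` N)"
    then obtain y where y: "\<exists>w\<in>g ` N. y w \<noteq> 0" "(\<Sum>w\<in>g ` N. y w *\<^sub>R w) = 0"
      using \<open>finite N\<close> by (auto simp: dependent_finite)
    then have "(\<Sum>u\<in>N. y (g u) *\<^sub>R g u) = 0"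
      by (simp add: sum.reindex[OF inj])
    then have "\<forall>u\<in>N. y (g u) = 0"
      by (rule indep)
    with y(1) show False
      by blast
  qed
qed

lemma convex_comb_in_rel_interior_convex_hull:
  fixes g :: "'b \<Rightarrow> 'v::euclidean_space"
  assumes "inj_on g N" "\<not> affine_dependent (g ` N)"
    and "\<And>u. u \<in> N \<Longrightarrow> 0 < \<mu> u" "sum \<mu> N = 1"
  shows "(\<Sum>u\<in>N. \<mu> u *\<^sub>R g u) \<in> rel_interior (convex hull (g ` N))"
proof -
  define \<nu> where "\<nu> = \<mu> \<circ> the_inv_into N g"
  have \<nu>: "\<nu> (g u) = \<mu> u" if "u \<in> N" for u
    using assms(1) that by (simp add: \<nu>_def the_inv_into_f_f)
  show ?thesis
    unfolding rel_interior_convex_hull_explicit[OF assms(2)]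
    using assms \<nu> by (auto intro!: exI[of _ \<nu>] simp: sum.reindex)
qed

lemma l1_normalize_positive_combination:
  fixes f :: "'b \<Rightarrow> real ^ 'n::finite"
  assumes "finite N" "N \<noteq> {}"
    and nonneg: "\<And>u. u \<in> N \<Longrightarrow> 0 \<le> f u" and nonzero: "\<And>u. u \<in> N \<Longrightarrow> f u \<noteq> 0"
    and indep: "\<And>x. (\<Sum>u\<in>N. x u *\<^sub>R f u) = 0 \<Longrightarrow> \<forall>u\<in>N. x u = 0"
    and pos: "\<And>u. u \<in> N \<Longrightarrow> 0 < y u"
  defines "g \<equiv> \<lambda>u. l1_normalize (f u)" and "W \<equiv> \<Sum>u\<in>N. y u *\<^sub>R f u"
  shows "inj_on g N \<and> independent (g ` N) \<and> l1_normalize W \<in> rel_interior (convex hull (g ` N))"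
proof -
  have norm_f: "0 < norm1 (f u)" if "u \<in> N" for u
    using nonzero that by (simp add: norm1_pos_iff)
  have "inj_on g N \<and> independent (g ` N)"
  proof (rule family_independent_imp_inj_on_independent[OF \<open>finite N\<close>])
    fix x assume "(\<Sum>u\<in>N. x u *\<^sub>R g u) = 0"
    then have "(\<Sum>u\<in>N. (x u / norm1 (f u)) *\<^sub>R f u) = 0"
      by (simp add: g_def l1_normalize_def divide_inverse)
    then show "\<forall>u\<in>N. x u = 0"
      using indep norm_f by fastforce
  qed
  moreover have norm_W: "norm1 W = (\<Sum>u\<in>N. y u * norm1 (f u))"
    unfolding W_def using nonneg pos
    by (subst norm1_sum_nonneg) (auto simp: norm1_scaleR less_eq_vec_def less_imp_le)
  then have "0 < norm1 W"
    using \<open>finite N\<close> \<open>N \<noteq> {}\<close> pos norm_f by (simp add: sum_pos)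
  then have "l1_normalize W = (\<Sum>u\<in>N. (y u * norm1 (f u) / norm1 W) *\<^sub>R g u)"
    unfolding l1_normalize_def W_def g_def scaleR_sum_right
    by (intro sum.cong refl) (auto simp: field_simps dest: norm_f)
  moreover have "sum (\<lambda>u. y u * norm1 (f u) / norm1 W) N = 1"
    using \<open>0 < norm1 W\<close> by (simp add: norm_W flip: sum_divide_distrib)
  ultimately show ?thesis
    using pos norm_f \<open>0 < norm1 W\<close> affine_dependent_imp_dependent
    by (auto intro!: convex_comb_in_rel_interior_convex_hull)
qed

locale block_family =
  fixes N :: "'b set" and L :: "'n::finite \<Rightarrow> bool" and c :: "'n \<Rightarrow> 'b"
    and e :: "'n \<Rightarrow> real" and \<alpha> \<beta> :: "'b \<Rightarrow> real" and f :: "'b \<Rightarrow> real ^ 'n"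
  assumes finite_N: "finite N"
    and component: "u \<in> N \<Longrightarrow> f u $ l = (if L l then (if c l = u then \<alpha> u else \<beta> u) * e l else 0)"
    and block_in_N: "L l \<Longrightarrow> c l \<in> N"
    and block_nonempty: "u \<in> N \<Longrightarrow> \<exists>l. L l \<and> c l = u"
    and e_pos: "0 < e l"
    and \<beta>_nonneg: "u \<in> N \<Longrightarrow> 0 \<le> \<beta> u"
    and \<beta>_less_\<alpha>: "u \<in> N \<Longrightarrow> \<beta> u < \<alpha> u"
begin

lemma \<alpha>_pos: "u \<in> N \<Longrightarrow> 0 < \<alpha> u"
  using \<beta>_nonneg \<beta>_less_\<alpha> by (rule order.strict_trans1)

definition ratio_sum :: real where
  "ratio_sum = (\<Sum>u\<in>N. \<beta> u / (\<alpha> u - \<beta> u))"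

lemma ratio_sum_nonneg: "0 \<le> ratio_sum"
  unfolding ratio_sum_def using \<beta>_nonneg \<beta>_less_\<alpha> by (auto intro!: sum_nonneg divide_nonneg_pos)

lemma combination_component:
  "(\<Sum>u\<in>N. x u *\<^sub>R f u) $ l =
     (if L l then (x (c l) * (\<alpha> (c l) - \<beta> (c l)) + (\<Sum>u\<in>N. x u * \<beta> u)) * e l else 0)"
proof (cases "L l")
  case True
  have "(\<Sum>u\<in>N. x u *\<^sub>R f u) $ l
      = (\<Sum>u\<in>N. x u * \<beta> u + (if u = c l then x u * (\<alpha> u - \<beta> u) else 0)) * e l"
    unfolding sum_component sum_distrib_right
    by (intro sum.cong) (auto simp: component True algebra_simps)
  also have "\<dots> = (x (c l) * (\<alpha> (c l) - \<beta> (c l)) + (\<Sum>u\<in>N. x u * \<beta> u)) * e l"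
    using finite_N block_in_N[OF True] by (simp add: sum.distrib)
  finally show ?thesis
    using True by simp
qed (simp add: component)

lemma combination_eq_0_imp:
  assumes "(\<Sum>u\<in>N. x u *\<^sub>R f u) = 0"
  shows "\<forall>u\<in>N. x u = 0"
proof -
  define s where "s = (\<Sum>u\<in>N. x u * \<beta> u)"
  have x: "x u = - s / (\<alpha> u - \<beta> u)" if u: "u \<in> N" for u
  proof -
    obtain l where "L l" "c l = u"
      using block_nonempty[OF u] by blast
    then have "(x u * (\<alpha> u - \<beta> u) + s) * e l = 0"
      using assms combination_component[of x l] by (simp add: s_def)
    then have "x u * (\<alpha> u - \<beta> u) + s = 0"
      using e_pos[of l] by simp
    then show ?thesis
      using \<beta>_less_\<alpha>[OF u] by (simp add: field_simps)
  qed
  have "s = (\<Sum>u\<in>N. x u * \<beta> u)"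
    by (simp add: s_def)
  also have "\<dots> = - s * ratio_sum"
    unfolding ratio_sum_def sum_distrib_left by (intro sum.cong) (simp_all add: x)
  finally have "s * (1 + ratio_sum) = 0"
    by (simp add: algebra_simps)
  then have "s = 0"
    using ratio_sum_nonneg by simp
  then show ?thesis
    using x by simp
qed

lemma positive_combination:
  obtains y where "\<And>u. u \<in> N \<Longrightarrow> 0 < y u"
    and "(\<Sum>u\<in>N. y u *\<^sub>R f u) = (\<chi> l. if L l then e l else 0)"
proof
  define y where "y u = 1 / ((1 + ratio_sum) * (\<alpha> u - \<beta> u))" for u
  show "0 < y u" if "u \<in> N" for u
    using ratio_sum_nonneg \<beta>_less_\<alpha>[OF that] by (simp add: y_def)
  have "(\<Sum>u\<in>N. y u * \<beta> u) = ratio_sum / (1 + ratio_sum)"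
    unfolding ratio_sum_def y_def sum_divide_distrib by (intro sum.cong) auto
  moreover have "y u * (\<alpha> u - \<beta> u) = 1 / (1 + ratio_sum)" if "u \<in> N" for u
    using ratio_sum_nonneg \<beta>_less_\<alpha>[OF that] by (simp add: y_def)
  ultimately show "(\<Sum>u\<in>N. y u *\<^sub>R f u) = (\<chi> l. if L l then e l else 0)"
    unfolding vec_eq_iff combination_component
    using ratio_sum_nonneg block_in_N by (simp add: add_divide_distrib[symmetric])
qed

lemma l1_normalize_in_rel_interior:
  assumes "N \<noteq> {}"
  defines "g \<equiv> \<lambda>u. l1_normalize (f u)"
  shows "inj_on g N \<and> independent (g ` N)
    \<and> l1_normalize (\<chi> l. if L l then e l else 0) \<in> rel_interior (convex hull (g ` N))"
proof -
  obtain y where "\<And>u. u \<in> N \<Longrightarrow> 0 < y u"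
    and y: "(\<Sum>u\<in>N. y u *\<^sub>R f u) = (\<chi> l. if L l then e l else 0)"
    using positive_combination by blast
  moreover have "0 \<le> f u" if "u \<in> N" for u
    using that e_pos \<beta>_nonneg \<alpha>_pos by (auto simp: less_eq_vec_def component less_imp_le)
  moreover have "f u \<noteq> 0" if u: "u \<in> N" for u
  proof -
    obtain l where "L l" "c l = u"
      using block_nonempty[OF u] by blast
    then have "f u $ l \<noteq> 0"
      using u e_pos[of l] \<alpha>_pos[OF u] by (auto simp: component)
    then show ?thesis
      by auto
  qed
  ultimately show ?thesis
    unfolding g_def y[symmetric]
    using l1_normalize_positive_combination[OF finite_N assms(1)] combination_eq_0_imp
    by blast
qed

end

section \<open>Paths and geodesics in trees\<close>

lemma tree_adj_in_V: "is_tree V adj \<Longrightarrow> adj u w \<Longrightarrow> u \<in> V \<and> w \<in> V"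
  unfolding is_tree_def by blast

lemma tree_adj_sym: "is_tree V adj \<Longrightarrow> adj u w \<Longrightarrow> adj w u"
  unfolding is_tree_def by blast

lemma tree_adj_irrefl: "is_tree V adj \<Longrightarrow> \<not> adj u u"
  unfolding is_tree_def by blast

lemma tree_ex1_path: "is_tree V adj \<Longrightarrow> u \<in> V \<Longrightarrow> w \<in> V \<Longrightarrow> \<exists>!p. is_path adj p u w"
  unfolding is_tree_def by blast

lemma geod_is_path: "is_tree V adj \<Longrightarrow> u \<in> V \<Longrightarrow> w \<in> V \<Longrightarrow> is_path adj (geod adj u w) u w"
  unfolding geod_def by (rule theI', rule tree_ex1_path)

lemma geod_unique:
  "is_tree V adj \<Longrightarrow> u \<in> V \<Longrightarrow> w \<in> V \<Longrightarrow> is_path adj p u w \<Longrightarrow> geod adj u w = p"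
  unfolding geod_def by (rule the1_equality, rule tree_ex1_path)

lemma is_path_ConsD:
  "is_path adj (a # p) a l \<Longrightarrow> p \<noteq> [] \<Longrightarrow> adj a (hd p) \<and> a \<notin> set p \<and> is_path adj p (hd p) l"
  unfolding is_path_def by (auto simp: successively_Cons)

lemma is_path_ConsI:
  "adj a (hd p) \<Longrightarrow> a \<notin> set p \<Longrightarrow> is_path adj p b l \<Longrightarrow> is_path adj (a # p) a l"
  unfolding is_path_def by (auto simp: successively_Cons)

lemma successively_drop: "successively P xs \<Longrightarrow> successively P (drop k xs)"
  by (metis append_take_drop_id successively_append_iff)

lemma is_path_drop: "is_path adj p a l \<Longrightarrow> k < length p \<Longrightarrow> is_path adj (drop k p) (p ! k) l"
  unfolding is_path_def by (auto simp: hd_drop_conv_nth successively_drop)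

lemma is_path_rev:
  "(\<And>x y. adj x y \<Longrightarrow> adj y x) \<Longrightarrow> is_path adj p a b \<Longrightarrow> is_path adj (rev p) b a"
  unfolding is_path_def by (auto simp: hd_rev last_rev elim: successively_mono)

lemma geod_edge: "is_tree V adj \<Longrightarrow> adj u v \<Longrightarrow> geod adj u v = [u, v]"
  using tree_adj_irrefl[of V adj u] tree_adj_in_V[of V adj u v]
  by (intro geod_unique) (auto simp: is_path_def)

lemma path_nbr_eq_hd:
  assumes T: "is_tree V adj" and lV: "l \<in> V"
    and P: "is_path adj (a # p) a l" and w: "w \<in> set p" and aw: "adj a w"
  shows "w = hd p"
proof -
  have aV: "a \<in> V"
    using tree_adj_in_V[OF T aw] by simp
  obtain k where k: "k < length p" "p ! k = w"
    using w by (auto simp: in_set_conv_nth)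
  have "p \<noteq> []"
    using w by auto
  then have p: "a \<notin> set p" "is_path adj p (hd p) l"
    using is_path_ConsD[OF P] by blast+
  then have "is_path adj (drop k p) w l"
    using is_path_drop k by metis
  moreover have "a \<notin> set (drop k p)"
    using p(1) in_set_dropD by metis
  ultimately have "is_path adj (a # drop k p) a l"
    using aw by (intro is_path_ConsI) (auto simp: is_path_def)
  \<comment> \<open>otherwise this would be a second path from a to l\<close>
  then have "a # drop k p = a # p"
    using geod_unique[OF T aV lV] P by metis
  then have "length p - k = length p"
    by (metis length_drop list.inject)
  then have "k = 0"
    using k(1) by arith
  then show ?thesis
    using k by (simp add: hd_conv_nth)
qed

definition first_step :: "('a \<Rightarrow> 'a \<Rightarrow> bool) \<Rightarrow> 'a \<Rightarrow> 'a \<Rightarrow> 'a" where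
  "first_step adj v l = hd (tl (geod adj v l))"

lemma geod_first_step:
  assumes T: "is_tree V adj" and "v \<in> V" "l \<in> V" "l \<noteq> v"
  shows "adj v (first_step adj v l) \<and> geod adj v l = v # geod adj (first_step adj v l) l"
proof -
  obtain p where p: "geod adj v l = v # p" "is_path adj (v # p) v l"
    using geod_is_path[OF assms(1-3)] by (metis is_path_def list.collapse)
  then have "p \<noteq> []"
    using \<open>l \<noteq> v\<close> by (auto simp: is_path_def)
  then have "adj v (hd p)" "is_path adj p (hd p) l"
    using is_path_ConsD[OF p(2)] by blast+
  moreover have "hd p \<in> V"
    using tree_adj_in_V[OF T \<open>adj v (hd p)\<close>] by blast
  ultimately show ?thesis
    using geod_unique[OF T _ \<open>l \<in> V\<close>] p(1) by (simp add: first_step_def)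
qed

lemma first_step_nbr: "is_tree V adj \<Longrightarrow> adj v u \<Longrightarrow> first_step adj v u = u"
  by (simp add: first_step_def geod_edge)

lemma geod_away_from_first_step:
  assumes T: "is_tree V adj" and vV: "v \<in> V" and lV: "l \<in> V" and "l \<noteq> v"
    and vu: "adj v u" and u: "first_step adj v l \<noteq> u"
  shows "geod adj u l = u # geod adj v l"
proof -
  let ?c = "first_step adj v l"
  have c: "adj v ?c" "geod adj v l = v # geod adj ?c l"
    using geod_first_step[OF T vV lV \<open>l \<noteq> v\<close>] by auto
  have path_v: "is_path adj (geod adj v l) v l"
    by (rule geod_is_path[OF T vV lV])
  have "hd (geod adj ?c l) = ?c"
    using geod_is_path[OF T _ lV] tree_adj_in_V[OF T c(1)] by (simp add: is_path_def)
  then have "u \<notin> set (geod adj ?c l)"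
    using path_nbr_eq_hd[OF T lV _ _ vu] path_v c(2) u by force
  moreover have "u \<noteq> v"
    using vu tree_adj_irrefl[OF T] by auto
  ultimately have "is_path adj (u # geod adj v l) u l"
    using path_v tree_adj_sym[OF T vu] c(2) by (intro is_path_ConsI) (auto simp: is_path_def)
  then show ?thesis
    using geod_unique[OF T _ lV] tree_adj_in_V[OF T vu] by blast
qed

lemma leaf_nbrs: "is_leaf V adj u \<Longrightarrow> adj u v \<Longrightarrow> nbrs adj u = {v}"
  unfolding is_leaf_def valency_def by (metis card_1_singletonE mem_Collect_eq nbrs_def singletonD)

lemma first_step_leaf:
  assumes T: "is_tree V adj" and "v \<in> V" "l \<in> V" "l \<noteq> v"
    and u: "is_leaf V adj u" "first_step adj v l = u"
  shows "l = u"
proof -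
  have vu: "adj v u" and g: "geod adj v l = v # geod adj u l"
    using geod_first_step[OF assms(1-4)] u(2) by auto
  have "is_path adj (v # geod adj u l) v l"
    using geod_is_path[OF assms(1-3)] g by simp
  then have v: "v \<notin> set (geod adj u l)"
    by (simp add: is_path_def)
  obtain q where q: "geod adj u l = u # q" "is_path adj (u # q) u l"
    using geod_is_path[OF T _ \<open>l \<in> V\<close>] tree_adj_in_V[OF T vu]
    by (metis is_path_def list.collapse)
  have "q = []"
  proof (rule ccontr)
    assume "q \<noteq> []"
    then have "adj u (hd q)"
      using is_path_ConsD[OF q(2)] by blast
    then have "hd q = v"
      using leaf_nbrs[OF u(1) tree_adj_sym[OF T vu]] by (auto simp: nbrs_def)
    then show False
      using v q(1) \<open>q \<noteq> []\<close> hd_in_set by fastforce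
  qed
  then show ?thesis
    using q(2) by (simp add: is_path_def)
qed

lemma path_end_is_leaf:
  assumes T: "is_tree V adj" and P: "is_path adj r a z" and aV: "a \<in> V" and "a \<noteq> z"
    and closed: "\<And>y. adj z y \<Longrightarrow> y \<in> set r"
  shows "is_leaf V adj z"
proof -
  have "rev r \<noteq> []" "hd (rev r) = z"
    using P by (auto simp: is_path_def hd_rev)
  then obtain p where p: "rev r = z # p"
    by (metis list.collapse)
  have Pr: "is_path adj (z # p) z a"
    using is_path_rev[OF tree_adj_sym[OF T] P] p by simp
  then have "p \<noteq> []"
    using \<open>a \<noteq> z\<close> by (auto simp: is_path_def)
  then have zp: "adj z (hd p)"
    using is_path_ConsD[OF Pr] by blast
  have nbr: "y = hd p" if "adj z y" for y
  proof -
    have "y \<in> set (z # p)"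
      using closed[OF that] by (simp flip: p)
    moreover have "y \<noteq> z"
      using that tree_adj_irrefl[OF T] by auto
    ultimately show ?thesis
      using path_nbr_eq_hd[OF T aV Pr _ that] by simp
  qed
  have "nbrs adj z = {hd p}"
    unfolding nbrs_def using nbr zp by blast
  then show ?thesis
    using tree_adj_in_V[OF T zp] by (simp add: is_leaf_def valency_def)
qed

lemma longest_path_extension:
  fixes xs :: "'a::finite list"
  assumes "distinct xs" "successively adj xs"
  obtains q where "distinct (xs @ q)" "successively adj (xs @ q)"
    and "\<And>q'. distinct (xs @ q') \<Longrightarrow> successively adj (xs @ q') \<Longrightarrow> length q' \<le> length q"
proof -
  define P where "P q \<longleftrightarrow> distinct (xs @ q) \<and> successively adj (xs @ q)" for q
  have "length q < Suc CARD('a)" if "P q" for q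
  proof -
    have "length (xs @ q) = card (set (xs @ q))"
      using that distinct_card unfolding P_def by metis
    also have "\<dots> \<le> CARD('a)"
      by (rule card_mono) auto
    finally show ?thesis
      by simp
  qed
  moreover have "P []"
    using assms by (simp add: P_def)
  ultimately obtain q where "P q" "\<forall>q'. P q' \<longrightarrow> length q' \<le> length q"
    using ex_has_greatest_nat[of P "[]" length] by blast
  then show ?thesis
    using that unfolding P_def by blast
qed

text \<open>The last vertex of a longest path starting with v, u is a leaf.\<close>
lemma leaf_beyond:
  fixes V :: "'a::finite set"
  assumes T: "is_tree V adj" and vu: "adj v u"
  shows "\<exists>l. is_leaf V adj l \<and> first_step adj v l = u"
proof -
  have "distinct [v, u]" "successively adj [v, u]"
    using vu tree_adj_irrefl[OF T] by auto
  then obtain q where r: "distinct ([v, u] @ q)" "successively adj ([v, u] @ q)"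
    and longest: "\<And>q'. distinct ([v, u] @ q') \<Longrightarrow> successively adj ([v, u] @ q') \<Longrightarrow> length q' \<le> length q"
    by (rule longest_path_extension) blast
  define r where "r = v # u # q"
  have P: "is_path adj r v (last r)"
    using r by (simp add: r_def is_path_def)
  have vV: "v \<in> V"
    using tree_adj_in_V[OF T vu] by blast
  have "v \<noteq> last r"
    using r last_in_set[of "u # q"] by (auto simp: r_def)
  moreover have "y \<in> set r" if "adj (last r) y" for y
  proof (rule ccontr)
    assume "y \<notin> set r"
    have "r \<noteq> []" "distinct r" "successively adj r"
      using r by (simp_all add: r_def)
    then have "distinct (r @ [y])" "successively adj (r @ [y])"
      using that \<open>y \<notin> set r\<close> by (simp_all add: successively_append_iff)
    then show False
      using longest[of "q @ [y]"] by (simp add: r_def)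
  qed
  ultimately have leaf: "is_leaf V adj (last r)"
    using path_end_is_leaf[OF T P vV] by blast
  then have "geod adj v (last r) = r"
    using geod_unique[OF T vV _ P] by (simp add: is_leaf_def)
  then show ?thesis
    using leaf by (auto simp: first_step_def r_def)
qed

section \<open>Moving an endpoint of ell across an edge\<close>

text \<open>In the notation of the paper, edge_weight w x = d_{w,x} and
  other_weights w x = d_w / d_{w,x} at a node w.\<close>

definition edge_weight :: "'a set \<Rightarrow> ('a \<Rightarrow> 'a \<Rightarrow> bool) \<Rightarrow> ('a \<Rightarrow> 'a \<Rightarrow> nat) \<Rightarrow> 'a \<Rightarrow> 'a \<Rightarrow> nat" where
  "edge_weight V adj d w x = (if is_node V adj w then d w x else 1)"

definition other_weights :: "'a set \<Rightarrow> ('a \<Rightarrow> 'a \<Rightarrow> bool) \<Rightarrow> ('a \<Rightarrow> 'a \<Rightarrow> nat) \<Rightarrow> 'a \<Rightarrow> 'a \<Rightarrow> nat" where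
  "other_weights V adj d w x = (if is_node V adj w then \<Prod>y\<in>{y. adj w y \<and> y \<noteq> x}. d w y else 1)"

definition boundary_weight :: "'a set \<Rightarrow> ('a \<Rightarrow> 'a \<Rightarrow> bool) \<Rightarrow> ('a \<Rightarrow> 'a \<Rightarrow> nat) \<Rightarrow> 'a set \<Rightarrow> nat" where
  "boundary_weight V adj d P = (\<Prod>w\<in>{w \<in> P. is_node V adj w}. \<Prod>x\<in>{x. adj w x \<and> x \<notin> P}. d w x)"

lemma ell_eq_boundary_weight: "ell V adj d u v = boundary_weight V adj d (set (geod adj u v))"
  by (simp add: ell_def boundary_weight_def)

text \<open>Adding a to P removes the edge [b, a] from the boundary of P and adds the other edges at a.\<close>

lemma boundary_weight_insert:
  fixes V :: "'a::finite set"
  assumes T: "is_tree V adj" and "a \<notin> P" "b \<in> P" and ab: "{w \<in> P. adj a w} = {b}"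
  shows "edge_weight V adj d b a * boundary_weight V adj d (insert a P)
    = other_weights V adj d a b * boundary_weight V adj d P"
proof -
  define G where "G Q w = (\<Prod>x\<in>{x. adj w x \<and> x \<notin> Q}. d w x)" for Q w
  let ?nodes = "{w \<in> P. is_node V adj w}"
  have bw: "boundary_weight V adj d Q = (\<Prod>w\<in>{w \<in> Q. is_node V adj w}. G Q w)" for Q
    by (simp add: boundary_weight_def G_def)
  have "{x. adj a x \<and> x \<notin> insert a P} = {x. adj a x \<and> x \<noteq> b}"
    using ab tree_adj_irrefl[OF T] \<open>b \<in> P\<close> by blast
  then have "other_weights V adj d a b = (if is_node V adj a then G (insert a P) a else 1)"
    by (simp add: other_weights_def G_def)
  moreover have "{w \<in> insert a P. is_node V adj w}
      = (if is_node V adj a then insert a ?nodes else ?nodes)"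
    by auto
  ultimately have "boundary_weight V adj d (insert a P)
      = other_weights V adj d a b * (\<Prod>w\<in>?nodes. G (insert a P) w)"
    using \<open>a \<notin> P\<close> by (simp add: bw)
  moreover have "G P w = (if w = b then d b a else 1) * G (insert a P) w" if "w \<in> P" for w
  proof (cases "w = b")
    case True
    then have "{x. adj w x \<and> x \<notin> P} = insert a {x. adj w x \<and> x \<notin> insert a P}"
      using ab \<open>a \<notin> P\<close> tree_adj_sym[OF T] by blast
    then show ?thesis
      using True by (simp add: G_def)
  next
    case False
    then have "{x. adj w x \<and> x \<notin> P} = {x. adj w x \<and> x \<notin> insert a P}"
      using ab that tree_adj_sym[OF T] by blast
    then show ?thesis
      using False by (simp add: G_def)
  qed
  then have "boundary_weight V adj d P = edge_weight V adj d b a * (\<Prod>w\<in>?nodes. G (insert a P) w)"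
    using \<open>b \<in> P\<close> by (simp add: bw edge_weight_def prod.distrib)
  ultimately show ?thesis
    by simp
qed

lemma ell_geod_Cons:
  fixes V :: "'a::finite set"
  assumes T: "is_tree V adj" and aV: "a \<in> V" and lV: "l \<in> V" and ab: "adj a b"
    and g: "geod adj a l = a # geod adj b l"
  shows "edge_weight V adj d b a * ell V adj d a l = other_weights V adj d a b * ell V adj d b l"
proof -
  let ?P = "set (geod adj b l)"
  have Pa: "is_path adj (a # geod adj b l) a l"
    using geod_is_path[OF T aV lV] g by simp
  have "is_path adj (geod adj b l) b l"
    using geod_is_path[OF T _ lV] tree_adj_in_V[OF T ab] by simp
  then have hd: "hd (geod adj b l) = b" and "b \<in> ?P"
    by (metis is_path_def, metis hd_in_set is_path_def)
  have "w = b" if "w \<in> ?P" "adj a w" for w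
    using path_nbr_eq_hd[OF T lV Pa that] hd by simp
  then have "{w \<in> ?P. adj a w} = {b}"
    using \<open>b \<in> ?P\<close> ab by blast
  moreover have "a \<notin> ?P"
    using Pa by (simp add: is_path_def)
  ultimately show ?thesis
    using boundary_weight_insert[OF T _ \<open>b \<in> ?P\<close>] g by (simp add: ell_eq_boundary_weight)
qed

lemma ell_edge:
  fixes V :: "'a::finite set"
  assumes T: "is_tree V adj" and uv: "adj u v"
  shows "ell V adj d u v = other_weights V adj d u v * other_weights V adj d v u"
proof -
  have "u \<noteq> v"
    using uv tree_adj_irrefl[OF T] by auto
  moreover have "{x. adj u x \<and> x \<noteq> u \<and> x \<noteq> v} = {x. adj u x \<and> x \<noteq> v}"
    and "{x. adj v x \<and> x \<noteq> u \<and> x \<noteq> v} = {x. adj v x \<and> x \<noteq> u}"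
    using tree_adj_irrefl[OF T] by auto
  moreover have "{w \<in> {u, v}. is_node V adj w}
      = (if is_node V adj u then {u} else {}) \<union> (if is_node V adj v then {v} else {})"
    by auto
  ultimately show ?thesis
    by (simp add: ell_eq_boundary_weight geod_edge[OF T uv] boundary_weight_def other_weights_def
        prod.union_disjoint)
qed

lemma ell_pos:
  "(\<And>w x. is_node V adj w \<Longrightarrow> adj w x \<Longrightarrow> 0 < d w x) \<Longrightarrow> 0 < ell V adj d u l"
  unfolding ell_def by (intro prod_pos) auto

lemma other_weights_pos:
  "(\<And>w x. is_node V adj w \<Longrightarrow> adj w x \<Longrightarrow> 0 < d w x) \<Longrightarrow> 0 < other_weights V adj d u v"
  unfolding other_weights_def by (auto intro!: prod_pos)

definition own_branch_coeff :: "'a set \<Rightarrow> ('a \<Rightarrow> 'a \<Rightarrow> bool) \<Rightarrow> ('a \<Rightarrow> 'a \<Rightarrow> nat) \<Rightarrow> 'a \<Rightarrow> 'a \<Rightarrow> real" where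
  "own_branch_coeff V adj d v u = real (edge_weight V adj d u v) / real (other_weights V adj d v u)"

definition other_branch_coeff :: "'a set \<Rightarrow> ('a \<Rightarrow> 'a \<Rightarrow> bool) \<Rightarrow> ('a \<Rightarrow> 'a \<Rightarrow> nat) \<Rightarrow> 'a \<Rightarrow> 'a \<Rightarrow> real" where
  "other_branch_coeff V adj d v u =
     (if is_leaf V adj u then 0 else real (other_weights V adj d u v) / real (d v u))"

lemma splice_diagram_weight_pos:
  "splice_diagram V adj d \<Longrightarrow> is_node V adj w \<Longrightarrow> adj w x \<Longrightarrow> 0 < d w x"
  unfolding splice_diagram_def by blast

lemma leaf_ne_node: "is_leaf V adj l \<Longrightarrow> is_node V adj v \<Longrightarrow> l \<in> V \<and> l \<noteq> v"
  unfolding is_leaf_def is_node_def by auto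

lemma wvec_own_branch:
  fixes V :: "'a::finite set"
  assumes S: "splice_diagram V adj d" and v: "is_node V adj v"
    and l: "is_leaf V adj l" and u: "first_step adj v l = u"
  shows "wvec V adj d u $ l = own_branch_coeff V adj d v u * real (ell V adj d v l)"
proof -
  have T: "is_tree V adj" and vV: "v \<in> V" and lV: "l \<in> V" and "l \<noteq> v"
    using S v leaf_ne_node[OF l v] by (auto simp: splice_diagram_def is_node_def)
  have vu: "adj v u" and g: "geod adj v l = v # geod adj u l"
    using geod_first_step[OF T vV lV \<open>l \<noteq> v\<close>] u by auto
  have pos: "0 < other_weights V adj d v u"
    by (rule other_weights_pos[of V adj d, OF splice_diagram_weight_pos[OF S]])
  show ?thesis
  proof (cases "is_leaf V adj u")
    case True
    then have "l = u" "\<not> is_node V adj u"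
      using first_step_leaf[OF T vV lV \<open>l \<noteq> v\<close> _ u] by (auto simp: is_leaf_def is_node_def)
    moreover have "ell V adj d v u = other_weights V adj d v u"
      using ell_edge[OF T vu, of d] \<open>\<not> is_node V adj u\<close> by (simp add: other_weights_def)
    ultimately show ?thesis
      using l pos by (simp add: wvec_def own_branch_coeff_def edge_weight_def)
  next
    case False
    have "edge_weight V adj d u v * ell V adj d v l = other_weights V adj d v u * ell V adj d u l"
      by (rule ell_geod_Cons[OF T vV lV vu g])
    then have "real (edge_weight V adj d u v) * real (ell V adj d v l)
        = real (other_weights V adj d v u) * real (ell V adj d u l)"
      by (metis of_nat_mult)
    then show ?thesis
      using False l pos by (simp add: wvec_def own_branch_coeff_def field_simps)
  qed
qed

lemma wvec_other_branch:
  fixes V :: "'a::finite set"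
  assumes S: "splice_diagram V adj d" and v: "is_node V adj v" and vu: "adj v u"
    and l: "is_leaf V adj l" and u: "first_step adj v l \<noteq> u"
  shows "wvec V adj d u $ l = other_branch_coeff V adj d v u * real (ell V adj d v l)"
proof -
  have T: "is_tree V adj" and vV: "v \<in> V" and lV: "l \<in> V" and "l \<noteq> v"
    using S v leaf_ne_node[OF l v] by (auto simp: splice_diagram_def is_node_def)
  have uv: "adj u v" and uV: "u \<in> V"
    using tree_adj_sym[OF T vu] tree_adj_in_V[OF T vu] by auto
  show ?thesis
  proof (cases "is_leaf V adj u")
    case True
    have "l \<noteq> u"
      using u first_step_nbr[OF T vu] by auto
    with True l show ?thesis
      by (simp add: wvec_def other_branch_coeff_def)
  next
    case False
    then have "is_node V adj u"
      using uV by (simp add: is_leaf_def is_node_def)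
    have "edge_weight V adj d v u * ell V adj d u l = other_weights V adj d u v * ell V adj d v l"
      using ell_geod_Cons[OF T uV lV uv] geod_away_from_first_step[OF T vV lV \<open>l \<noteq> v\<close> vu u]
      by blast
    then have "real (d v u) * real (ell V adj d u l) = real (other_weights V adj d u v) * real (ell V adj d v l)"
      using v by (metis edge_weight_def of_nat_mult)
    moreover have "0 < d v u"
      by (rule splice_diagram_weight_pos[OF S v vu])
    ultimately show ?thesis
      using False l by (simp add: wvec_def other_branch_coeff_def field_simps)
  qed
qed

lemma wvec_nbr_component:
  fixes V :: "'a::finite set"
  assumes S: "splice_diagram V adj d" and v: "is_node V adj v" and vu: "adj v u"
  shows "wvec V adj d u $ l = (if is_leaf V adj l then
    (if first_step adj v l = u then own_branch_coeff V adj d v u else other_branch_coeff V adj d v u)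
      * real (ell V adj d v l) else 0)"
proof (cases "is_leaf V adj l")
  case True
  then show ?thesis
    using wvec_own_branch[OF S v True] wvec_other_branch[OF S v vu True]
    by (cases "first_step adj v l = u") simp_all
qed (simp add: wvec_def)

lemma other_branch_coeff_nonneg: "0 \<le> other_branch_coeff V adj d v u"
  by (simp add: other_branch_coeff_def)

lemma other_branch_coeff_less_own:
  fixes V :: "'a::finite set"
  assumes S: "splice_diagram V adj d" and E: "edge_determinant_condition V adj d"
    and v: "is_node V adj v" and vu: "adj v u"
  shows "other_branch_coeff V adj d v u < own_branch_coeff V adj d v u"
proof -
  have T: "is_tree V adj"
    using S by (simp add: splice_diagram_def)
  have A: "0 < other_weights V adj d v u" and B: "0 < other_weights V adj d u v"
    using other_weights_pos[of V adj d, OF splice_diagram_weight_pos[OF S]] by auto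
  show ?thesis
  proof (cases "is_leaf V adj u")
    case True
    then show ?thesis
      using A by (simp add: other_branch_coeff_def own_branch_coeff_def edge_weight_def is_leaf_def is_node_def)
  next
    case False
    then have u: "is_node V adj u"
      using tree_adj_in_V[OF T vu] by (simp add: is_leaf_def is_node_def)
    have "ell V adj d u v < d u v * d v u"
      using E tree_adj_sym[OF T vu] u v by (simp add: edge_determinant_condition_def)
    then have "other_weights V adj d u v * other_weights V adj d v u < d u v * d v u"
      using ell_edge[OF T tree_adj_sym[OF T vu], of d] by simp
    then have "real (other_weights V adj d u v) * real (other_weights V adj d v u) < real (d u v) * real (d v u)"
      by (metis of_nat_less_iff of_nat_mult)
    with False u A splice_diagram_weight_pos[OF S v vu] show ?thesis
      by (simp add: other_branch_coeff_def own_branch_coeff_def edge_weight_def field_simps)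
  qed
qed

lemma nbrs_node_nonempty:
  assumes S: "splice_diagram V adj d" and v: "is_node V adj v"
  shows "nbrs adj v \<noteq> {}"
proof -
  have T: "is_tree V adj" and vV: "v \<in> V"
    using S v by (auto simp: splice_diagram_def is_node_def)
  obtain w where w: "w \<in> V" "3 \<le> valency adj w"
    using S by (auto simp: splice_diagram_def)
  show ?thesis
  proof (cases "w = v")
    case True
    then show ?thesis
      using w by (auto simp: valency_def)
  next
    case False
    then show ?thesis
      using geod_first_step[OF T vV w(1)] by (auto simp: nbrs_def)
  qed
qed

lemma block_family_nbrs:
  fixes V :: "'a::finite set"
  assumes S: "splice_diagram V adj d" and E: "edge_determinant_condition V adj d"
    and v: "is_node V adj v"
  shows "block_family (nbrs adj v) (is_leaf V adj) (first_step adj v) (\<lambda>l. real (ell V adj d v l))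
    (own_branch_coeff V adj d v) (other_branch_coeff V adj d v) (wvec V adj d)"
proof
  have T: "is_tree V adj"
    using S by (simp add: splice_diagram_def)
  fix u l
  show "finite (nbrs adj v)"
    by simp
  show "u \<in> nbrs adj v \<Longrightarrow> wvec V adj d u $ l = (if is_leaf V adj l then
      (if first_step adj v l = u then own_branch_coeff V adj d v u else other_branch_coeff V adj d v u)
      * real (ell V adj d v l) else 0)"
    using wvec_nbr_component[OF S v] by (simp add: nbrs_def)
  show "first_step adj v l \<in> nbrs adj v" if "is_leaf V adj l"
  proof -
    have "v \<in> V" "l \<in> V" "l \<noteq> v"
      using leaf_ne_node[OF that v] v by (auto simp: is_node_def)
    then show ?thesis
      using geod_first_step[OF T] by (simp add: nbrs_def)
  qed
  show "u \<in> nbrs adj v \<Longrightarrow> \<exists>l. is_leaf V adj l \<and> first_step adj v l = u"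
    using leaf_beyond[OF T] by (simp add: nbrs_def)
  show "0 < real (ell V adj d v l)"
    using ell_pos[of V adj d, OF splice_diagram_weight_pos[OF S]] by simp
  show "0 \<le> other_branch_coeff V adj d v u"
    by (rule other_branch_coeff_nonneg)
  show "u \<in> nbrs adj v \<Longrightarrow> other_branch_coeff V adj d v u < own_branch_coeff V adj d v u"
    using other_branch_coeff_less_own[OF S E v] by (simp add: nbrs_def)
qed

theorem proposition5p7:
  fixes V :: "('a::finite) set" and adj :: "'a \<Rightarrow> 'a \<Rightarrow> bool" and d :: "'a \<Rightarrow> 'a \<Rightarrow> nat"
    and v :: 'a
  assumes "splice_diagram V adj d"
    and "edge_determinant_condition V adj d"
    and "is_node V adj v"
  shows "inj_on (rho V adj d) (nbrs adj v) \<and> independent (rho V adj d ` nbrs adj v)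
    \<and> rho V adj d v \<in> rel_interior (convex hull (rho V adj d ` nbrs adj v))"
proof -
  interpret block_family "nbrs adj v" "is_leaf V adj" "first_step adj v" "\<lambda>l. real (ell V adj d v l)"
      "own_branch_coeff V adj d v" "other_branch_coeff V adj d v" "wvec V adj d"
    by (rule block_family_nbrs[OF assms])
  have "wvec V adj d v = (\<chi> l. if is_leaf V adj l then real (ell V adj d v l) else 0)"
    using assms(3) by (simp add: wvec_def vec_eq_iff is_leaf_def is_node_def)
  moreover have "rho V adj d = (\<lambda>u. l1_normalize (wvec V adj d u))"
    by (simp add: fun_eq_iff rho_def l1_normalize_def)
  ultimately show ?thesis
    using l1_normalize_in_rel_interior[OF nbrs_node_nonempty[OF assms(1,3)]] by simp
qed

end
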